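(* Let $A$ be a $3\times 3$ skew-symmetric integer matrix which is mutation-cyclic, and let $g\in\mathbb{Z}^3$ be a nonzero vector with $Ag=0$. Write the output of the algorithm described in the context as $m(A)=S(-a,-b,c)$ and suppose $c>2$. Then the graded cluster algebra $\mathcal{A}((x_1,x_2,x_3),A,g)$ has only finitely many cluster variables of each occurring degree. Moreover, the grading is not balanced.
   Context: Notation: for integers $p,q,r$, $S(p,q,r)$ denotes the skew-symmetric matrix $\begin{pmatrix}0&-p&-r\\ p&0&-q\\ r&q&0\end{pmatrix}$. Matrix mutation: for a $3\times3$ skew-symmetric integer matrix $B=(b_{ij})$ and $k\in\{1,2,3\}$, $\mu_k(B)=(b'_{ij})$ with $b'_{ij}=-b_{ij}$ if $i=k$ or $j=k$, and $b'_{ij}=b_{ij}+\operatorname{sgn}(b_{ik})\max(b_{ik}b_{kj},0)$ otherwise. The mutation class of $B$ is the set of matrices obtained from $B$ by finite sequences of mutations. A $3\times 3$ skew-symmetric matrix is acyclic if its associated quiver (with $b_{ij}$ arrows $i\to j$ when $b_{ij}>0$) has no oriented cycle, equivalently if some column has all its nonzero entries of the same sign; otherwise it is cyclic. $A$ is mutation-cyclic if every matrix in its mutation class is cyclic. Essential equivalence: $B$ and $C$ are essentially equivalent if there is a permutation $\sigma$ of $\{1,2,3\}$ with $C_{ij}=B_{\sigma(i)\sigma(j)}$ for all $i,j$, or $C_{ij}=-B_{\sigma(i)\sigma(j)}$ for all $i,j$ (overall sign is disregarded). The standard form of $B$ is the first matrix in the list $S(-a,-b,c),\,S(-a,b,c),\,S(a,-b,c),\,S(a,b,c)$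 (with $a\ge b\ge c\ge 0$) that is essentially equivalent to $B$. Algorithm defining $m(A)$: replace the input by its standard form and write it $S(-a,-b,c)$ with $|a|\ge|b|\ge|c|\ge 0$; set $A_1$ equal to it. Step 1: if $a\ge b\ge c\ge 2$ and $bc-a\ge b$, the input passes; otherwise, if some column is sign-coherent or $c\le 2$, it fails. Step 2 (for the current $A_i$): if some matrix essentially equivalent to $\mu_3(A_i)$ has the form $S(-d,-e,f)$ with $d\ge e\ge f\ge 2$, let $A_{i+1}$ be such a matrix; otherwise fail. Then: if $f\ge 3$ and $ef-d\ge e$, pass; if $f=2$, pass if $d=e$ and fail if $d>e$; otherwise increase $i$ and repeat Step 2. Output: if the input passed with the most recently computed matrix $S(-d,-e,f)$ (for the pass in Step 1 this is $S(-a,-b,c)$) satisfying $ef-d\ge d$, then $m(A)$ is that matrix; if it passed with $ef-d<d$, then $m(A)$ is $\mu_3$ of that matrix; if it failed, continue computing $A_i$ in the same way until an acyclic $A_k$ is reached and set $m(A)=A_k$. Graded cluster algebras: a seed $((x_1,x_2,x_3),B)$ mutates in direction $k$ to $(x',\mu_k B)$ with $x'_j=x_j$ ($j\ne k$) and $x'_k=\big(\prod_{b_{ik}>0}x_i^{b_{ik}}+\prod_{b_{ik}<0}x_i^{-b_{ik}}\big)/x_k$. Cluster variables are all entries of clusters reachable by iterated mutation, and $\mathcal{A}(x,B,g)$ is the algebra they generate, graded by $\deg x_i=g_i$ where $Bg=0$; under mutation at $k$ the degree vector becomes $g'$ with $g'_j=g_j$ ($j\neq k$) and $g'_k=-g_k+\sum_{b_{ik}>0}b_{ik}g_i$,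 and every cluster variable is homogeneous. A degree occurs if some cluster variable has that degree. The grading is balanced if for every $d$ there is a bijection between the cluster variables of degree $d$ and those of degree $-d$. *)

theory Defs
  imports Complex_Main
begin

text \<open>3x3 integer matrices, indexed by 1,2,3 (entries outside are 0).\<close>
type_synonym mat3 = "nat \<Rightarrow> nat \<Rightarrow> int"

definition I3 :: "nat set" where "I3 = {1,2,3}"

definition skew3 :: "mat3 \<Rightarrow> bool" where
  "skew3 B \<longleftrightarrow> (\<forall>i j. B i j = - B j i) \<and> (\<forall>i j. i \<notin> I3 \<or> j \<notin> I3 \<longrightarrow> B i j = 0)"

definition S :: "int \<Rightarrow> int \<Rightarrow> int \<Rightarrow> mat3" where
  "S p q r = (\<lambda>i j.
     if i = 1 \<and> j = 2 then -p else if i = 1 \<and> j = 3 then -r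
     else if i = 2 \<and> j = 1 then p else if i = 2 \<and> j = 3 then -q
     else if i = 3 \<and> j = 1 then r else if i = 3 \<and> j = 2 then q else 0)"

definition negm :: "mat3 \<Rightarrow> mat3" where
  "negm B = (\<lambda>i j. - B i j)"

definition mut :: "nat \<Rightarrow> mat3 \<Rightarrow> mat3" where
  "mut k B = (\<lambda>i j. if i \<notin> I3 \<or> j \<notin> I3 then 0
      else if i = k \<or> j = k then - B i j
      else B i j + sgn (B i k) * max (B i k * B k j) 0)"

inductive mut_class :: "mat3 \<Rightarrow> mat3 \<Rightarrow> bool" for A :: mat3 where
  refl: "mut_class A A"
| step: "mut_class A B \<Longrightarrow> k \<in> I3 \<Longrightarrow> mut_class A (mut k B)"

definition acyclic3 :: "mat3 \<Rightarrow> bool" where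
  "acyclic3 B \<longleftrightarrow> (\<exists>j\<in>I3. (\<forall>i\<in>I3. B i j \<ge> 0) \<or> (\<forall>i\<in>I3. B i j \<le> 0))"

definition mutation_cyclic :: "mat3 \<Rightarrow> bool" where
  "mutation_cyclic A \<longleftrightarrow> (\<forall>B. mut_class A B \<longrightarrow> \<not> acyclic3 B)"

definition ess_equiv :: "mat3 \<Rightarrow> mat3 \<Rightarrow> bool" where
  "ess_equiv B C \<longleftrightarrow> (\<exists>\<sigma>. bij_betw \<sigma> I3 I3 \<and>
     ((\<forall>i\<in>I3. \<forall>j\<in>I3. C i j = B (\<sigma> i) (\<sigma> j)) \<or>
      (\<forall>i\<in>I3. \<forall>j\<in>I3. C i j = - B (\<sigma> i) (\<sigma> j))))"

definition std_form :: "mat3 \<Rightarrow> mat3" where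
  "std_form B = (let l = sort [\<bar>B 1 2\<bar>, \<bar>B 1 3\<bar>, \<bar>B 2 3\<bar>];
                     a = l ! 2; b = l ! 1; c = l ! 0 in
     if ess_equiv B (S (-a) (-b) c) then S (-a) (-b) c
     else if ess_equiv B (S (-a) b c) then S (-a) b c
     else if ess_equiv B (S a (-b) c) then S a (-b) c
     else S a b c)"

text \<open>Output of a pass with most recent matrix S(-d,-e,f).\<close>
definition out_of :: "int \<Rightarrow> int \<Rightarrow> int \<Rightarrow> mat3" where
  "out_of d e f = (if e * f - d \<ge> d then S (-d) (-e) f else mut 3 (S (-d) (-e) f))"

text \<open>Continuation after failure: keep computing A_i (each an essentially
  equivalent form of mu_3 of the previous one) until an acyclic one is reached.\<close>
inductive fail_run :: "mat3 \<Rightarrow> mat3 \<Rightarrow> bool" where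
  stop: "acyclic3 B \<Longrightarrow> fail_run B B"
| go: "\<not> acyclic3 B \<Longrightarrow> ess_equiv (mut 3 B) C \<Longrightarrow> fail_run C M \<Longrightarrow> fail_run B M"

text \<open>Step 2 iteration from the current matrix A_i, terminating with output M.\<close>
inductive run2 :: "mat3 \<Rightarrow> mat3 \<Rightarrow> bool" where
  pass: "\<lbrakk>ess_equiv (mut 3 B) (S (-d) (-e) f); d \<ge> e; e \<ge> f; f \<ge> 2;
          (f \<ge> 3 \<and> e * f - d \<ge> e) \<or> (f = 2 \<and> d = e)\<rbrakk> \<Longrightarrow> run2 B (out_of d e f)"
| cont: "\<lbrakk>ess_equiv (mut 3 B) (S (-d) (-e) f); d \<ge> e; e \<ge> f; f \<ge> 3;
          e * f - d < e; run2 (S (-d) (-e) f) M\<rbrakk> \<Longrightarrow> run2 B M"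
| fail_f2: "\<lbrakk>ess_equiv (mut 3 B) (S (-d) (-e) f); d \<ge> e; e \<ge> f; f = 2; d > e;
          fail_run (S (-d) (-e) f) M\<rbrakk> \<Longrightarrow> run2 B M"
| fail_nf: "\<lbrakk>\<not> (\<exists>d e f. ess_equiv (mut 3 B) (S (-d) (-e) f) \<and> d \<ge> e \<and> e \<ge> f \<and> f \<ge> 2);
          fail_run B M\<rbrakk> \<Longrightarrow> run2 B M"

text \<open>m_out A M: the algorithm on input A terminates with m(A) = M.
  The standard form A_1 is written S(-a,-b,c), i.e. a = -A_1(2,1), b = -A_1(3,2), c = A_1(3,1).\<close>
definition m_out :: "mat3 \<Rightarrow> mat3 \<Rightarrow> bool" where
  "m_out A M \<longleftrightarrow> (let A1 = std_form A; a = - A1 2 1; b = - A1 3 2; c = A1 3 1 in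
     if a \<ge> b \<and> b \<ge> c \<and> c \<ge> 2 \<and> b * c - a \<ge> b then M = out_of a b c
     else if acyclic3 A1 \<or> c \<le> 2 then fail_run A1 M
     else run2 A1 M)"

text \<open>Cluster variables are subtraction-free rational functions in x1,x2,x3; we represent
  each by the function it induces on the positive orthant (and 0 elsewhere).  Two rational
  functions are equal iff they agree on the positive orthant.\<close>
type_synonym cvar = "(nat \<Rightarrow> real) \<Rightarrow> real"

definition pos3 :: "(nat \<Rightarrow> real) \<Rightarrow> bool" where
  "pos3 p \<longleftrightarrow> (\<forall>i\<in>I3. p i > 0)"

definition x0 :: "nat \<Rightarrow> cvar" where
  "x0 i = (\<lambda>p. if pos3 p then p i else 0)"

definition mut_cluster :: "nat \<Rightarrow> mat3 \<Rightarrow> (nat \<Rightarrow> cvar) \<Rightarrow> (nat \<Rightarrow> cvar)" where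
  "mut_cluster k B x = x(k := (\<lambda>p. if pos3 p then
      ((\<Prod>i\<in>{i\<in>I3. B i k > 0}. x i p ^ nat (B i k)) +
       (\<Prod>i\<in>{i\<in>I3. B i k < 0}. x i p ^ nat (- B i k))) / x k p
      else 0))"

definition mut_deg :: "nat \<Rightarrow> mat3 \<Rightarrow> (nat \<Rightarrow> int) \<Rightarrow> (nat \<Rightarrow> int)" where
  "mut_deg k B h = h(k := - h k + (\<Sum>i\<in>{i\<in>I3. B i k > 0}. B i k * h i))"

inductive seed_reach :: "mat3 \<Rightarrow> (nat \<Rightarrow> int) \<Rightarrow> (nat \<Rightarrow> cvar) \<Rightarrow> mat3 \<Rightarrow> (nat \<Rightarrow> int) \<Rightarrow> bool"
  for A :: mat3 and g :: "nat \<Rightarrow> int" where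
  init: "seed_reach A g x0 A g"
| step: "seed_reach A g x B h \<Longrightarrow> k \<in> I3 \<Longrightarrow>
         seed_reach A g (mut_cluster k B x) (mut k B) (mut_deg k B h)"

definition cvars_deg :: "mat3 \<Rightarrow> (nat \<Rightarrow> int) \<Rightarrow> int \<Rightarrow> cvar set" where
  "cvars_deg A g d = {v. \<exists>x B h i. seed_reach A g x B h \<and> i \<in> I3 \<and> v = x i \<and> h i = d}"

definition balanced :: "mat3 \<Rightarrow> (nat \<Rightarrow> int) \<Rightarrow> bool" where
  "balanced A g \<longleftrightarrow> (\<forall>d. \<exists>f. bij_betw f (cvars_deg A g d) (cvars_deg A g (- d)))"

end

theory Submission
  imports Defs
begin

text \<open>
  Every matrix in the mutation class of a mutation-cyclic \<open>A\<close> is an oriented 3-cycle with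
  positive weights \<open>(w1, w2, w3)\<close>; mutation at \<open>k\<close> replaces \<open>wk\<close> by \<open>wi * wj - wk\<close> (\<open>i, j\<close> the
  other two vertices), which preserves the Markov constant \<open>w1^2 + w2^2 + w3^2 - w1 * w2 * w3\<close>.
  When the algorithm passes with \<open>c > 2\<close>, its last matrix \<open>S(-d,-e,f)\<close> has \<open>f = c \<ge> 3\<close> and
  \<open>ef - d \<ge> e\<close>, which forces the Markov constant to be nonpositive. Then all weights are at
  least 3, so at every seed only the mutation at the strictly largest weight can decrease the
  maximal weight: along a reduced mutation sequence the maximal weight decreases, stays level at
  most once, and then strictly increases. Hence a cluster variable sitting at a vertex of weight
  \<open>w\<close> is already produced by a sequence of length at most \<open>w\<close> plus the maximal weight of \<open>A\<close>.
  Because \<open>Ag = 0\<close>, the degree vector of every seed is its weight vector scaled by the fixed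
  nonzero factor \<open>g1 / weight A 1\<close>: a degree bounds the weight and hence the length, so it
  carries only finitely many cluster variables; and every degree has the sign of \<open>g1\<close>, so \<open>-g1\<close>
  never occurs although \<open>g1\<close> does.
\<close>

section \<open>Exchange matrices and their mutation\<close>

lemma I3_cases: "i \<in> I3 \<Longrightarrow> i = 1 \<or> i = 2 \<or> i = 3"
  unfolding I3_def by auto

lemma I3_mem [simp]: "1 \<in> I3" "Suc 0 \<in> I3" "2 \<in> I3" "3 \<in> I3"
  unfolding I3_def by auto

lemma finite_I3 [simp]: "finite I3"
  by (simp add: I3_def)

lemma sum_I3: "(\<Sum>i\<in>I3. f i) = f 1 + f 2 + (f 3 :: int)"
  by (simp add: I3_def)

lemma I3_other_two:
  assumes "k \<in> I3"
  obtains i j where "I3 = {i, j, k}" "i \<noteq> j" "i \<noteq> k" "j \<noteq> k"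
proof -
  consider "k = 1" | "k = 2" | "k = 3" using assms I3_cases by blast
  then show thesis
  proof cases
    case 1 then show thesis using that[of 2 3] by (auto simp: I3_def)
  next
    case 2 then show thesis using that[of 1 3] by (auto simp: I3_def)
  next
    case 3 then show thesis using that[of 1 2] by (auto simp: I3_def)
  qed
qed

lemma S_entries [simp]:
  "S p q r 1 1 = 0" "S p q r 1 2 = -p" "S p q r 1 3 = -r"
  "S p q r 2 1 = p" "S p q r 2 2 = 0" "S p q r 2 3 = -q"
  "S p q r 3 1 = r" "S p q r 3 2 = q" "S p q r 3 3 = 0"
  unfolding S_def by auto

lemmas S_entries_Suc0 [simp] = S_entries[unfolded One_nat_def]

lemma S_outside: "i \<notin> I3 \<or> j \<notin> I3 \<Longrightarrow> S p q r i j = 0"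
  unfolding S_def I3_def by auto

lemma mat3_eqI:
  assumes "\<And>i j. i \<notin> I3 \<or> j \<notin> I3 \<Longrightarrow> M i j = 0"
    and "\<And>i j. i \<notin> I3 \<or> j \<notin> I3 \<Longrightarrow> N i j = 0"
    and "\<And>i j. i \<in> I3 \<Longrightarrow> j \<in> I3 \<Longrightarrow> M i j = N i j"
  shows "M = N"
  using assms by (intro ext) metis

lemma S_eqI:
  assumes "\<And>i j. i \<notin> I3 \<or> j \<notin> I3 \<Longrightarrow> M i j = 0"
    and "M 1 1 = 0" "M 2 2 = 0" "M 3 3 = 0"
    and "M 2 1 = p" "M 3 2 = q" "M 3 1 = r" "M 1 2 = -p" "M 2 3 = -q" "M 1 3 = -r"
  shows "M = S p q r"
proof (rule mat3_eqI)
  fix i j assume "i \<in> I3" "j \<in> I3"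
  then show "M i j = S p q r i j"
    using assms(2-) I3_cases[of i] I3_cases[of j] by auto
qed (use assms(1) S_outside in auto)

lemma skew3_S: "skew3 (S p q r)"
  unfolding skew3_def
proof (intro conjI allI impI)
  fix i j :: nat
  show "S p q r i j = - S p q r j i"
    by (cases "i \<in> I3 \<and> j \<in> I3") (use I3_cases[of i] I3_cases[of j] in \<open>auto simp: S_outside\<close>)
qed (rule S_outside)

lemma skew3_diag: "skew3 B \<Longrightarrow> B i i = 0"
  unfolding skew3_def by (metis add.inverse_neutral neg_equal_zero)

lemma skew3_eq_S:
  assumes "skew3 B"
  shows "B = S (B 2 1) (B 3 2) (B 3 1)"
proof (rule S_eqI)
  have "B i j = - B j i" for i j
    using assms unfolding skew3_def by blast
  then show "B 1 2 = - B 2 1" "B 2 3 = - B 3 2" "B 1 3 = - B 3 1" by blast+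
next
  show "\<And>i j. i \<notin> I3 \<or> j \<notin> I3 \<Longrightarrow> B i j = 0"
    using assms unfolding skew3_def by blast
qed (simp_all add: skew3_diag[OF assms])

lemma sgn_max_antisym:
  fixes u v :: int
  shows "sgn u * max (- (u * v)) 0 = - (sgn v * max (- (v * u)) 0)"
  by (cases u "0::int" rule: linorder_cases; cases v "0::int" rule: linorder_cases)
     (simp_all add: max_def mult_less_0_iff zero_le_mult_iff mult.commute[of u v])

lemma skew3_mut:
  assumes "skew3 B"
  shows "skew3 (mut k B)"
  unfolding skew3_def
proof (intro conjI allI impI)
  have B: "B i j = - B j i" for i j
    using assms unfolding skew3_def by blast
  fix i j
  have "B i j + sgn (B i k) * max (B i k * B k j) 0
    = - (B j i + sgn (B j k) * max (B j k * B k i) 0)"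
    using sgn_max_antisym[of "B i k" "B j k"] by (simp only: B[of i j] B[of k i] B[of k j])
  then show "mut k B i j = - mut k B j i"
    unfolding mut_def using B[of i j] by (simp add: disj_commute)
qed (auto simp: mut_def)

lemma mut_involutive:
  assumes "skew3 B"
  shows "mut k (mut k B) = B"
proof (rule mat3_eqI)
  have out: "i \<notin> I3 \<or> j \<notin> I3 \<Longrightarrow> B i j = 0" for i j
    using assms unfolding skew3_def by blast
  fix i j assume "i \<in> I3" "j \<in> I3"
  then show "mut k (mut k B) i j = B i j"
    using out[of i k] by (cases "k \<in> I3") (auto simp: mut_def sgn_minus)
next
  show "\<And>i j. i \<notin> I3 \<or> j \<notin> I3 \<Longrightarrow> B i j = 0"
    using assms unfolding skew3_def by blast
qed (auto simp: mut_def)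

lemma sgn_max_cases: "max (- (q * r)) 0 = 0 \<or> sgn q = - sgn (r::int)"
  by (cases q "0::int" rule: linorder_cases; cases r "0::int" rule: linorder_cases)
     (simp_all add: max_def mult_less_0_iff zero_le_mult_iff)

lemma mut1_S: "mut 1 (S p q r) = S (-p) (q + sgn r * max (- r * p) 0) (-r)"
  using sgn_max_cases[of p r] by (intro S_eqI) (auto simp: mut_def S_outside algebra_simps)

lemma mut2_S: "mut 2 (S p q r) = S (-p) (-q) (r + sgn q * max (q * p) 0)"
  using sgn_max_cases[of q "-p"] by (intro S_eqI) (auto simp: mut_def S_outside algebra_simps)

lemma mut3_S: "mut 3 (S p q r) = S (p - sgn q * max (- q * r) 0) (-q) (-r)"
  using sgn_max_cases[of q r] by (intro S_eqI) (auto simp: mut_def S_outside algebra_simps)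

lemma acyclic3_S: "acyclic3 (S p q r) \<longleftrightarrow> \<not> ((p > 0 \<and> q > 0 \<and> r < 0) \<or> (p < 0 \<and> q < 0 \<and> r > 0))"
  unfolding acyclic3_def I3_def by simp linarith

section \<open>Weights, the Markov constant and the mutation class\<close>

definition weight :: "mat3 \<Rightarrow> nat \<Rightarrow> int" where
  "weight B k = (if k = 1 then \<bar>B 2 3\<bar> else if k = 2 then \<bar>B 1 3\<bar> else \<bar>B 1 2\<bar>)"

lemma weight_nonneg: "weight B k \<ge> 0"
  by (simp add: weight_def)

definition markov :: "mat3 \<Rightarrow> int" where
  "markov B = (\<Sum>k\<in>I3. weight B k ^ 2) - (\<Prod>k\<in>I3. weight B k)"

lemma markov_split:
  assumes "I3 = {i, j, k}" "i \<noteq> j" "i \<noteq> k" "j \<noteq> k"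
  shows "markov B = weight B i ^ 2 + weight B j ^ 2 + weight B k ^ 2
    - weight B i * weight B j * weight B k"
  unfolding markov_def assms(1) using assms(2-) by (simp add: algebra_simps)

lemma prod_other_two:
  assumes "I3 = {i, j, k}" "i \<noteq> j" "i \<noteq> k" "j \<noteq> k"
  shows "(\<Prod>l\<in>I3-{k}. f l) = f i * f j"
proof -
  have "I3 - {k} = {i, j}" using assms by auto
  then show ?thesis using assms(2) by simp
qed

lemma weight_eq_abs_entry:
  assumes "skew3 B" "i \<in> I3" "j \<in> I3" "k \<in> I3" "i \<noteq> j" "i \<noteq> k" "j \<noteq> k"
  shows "\<bar>B i j\<bar> = weight B k"
proof -
  have "\<bar>B j i\<bar> = \<bar>B i j\<bar>"
    using assms(1) unfolding skew3_def by (metis abs_minus_cancel)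
  then show ?thesis
    using I3_cases[OF assms(2)] I3_cases[OF assms(3)] I3_cases[OF assms(4)] assms(5-)
    by (auto simp: weight_def)
qed

lemma weight_mut_other:
  assumes "j \<in> I3" "k \<in> I3" "j \<noteq> k"
  shows "weight (mut k B) j = weight B j"
  using I3_cases[OF assms(1)] I3_cases[OF assms(2)] assms(3) by (auto simp: weight_def mut_def)

text \<open>\<open>cyc 1 w1 w2 w3\<close> is the 3-cycle \<open>1 \<rightarrow> 2 \<rightarrow> 3 \<rightarrow> 1\<close> in which the arrow not incident to vertex \<open>k\<close>
  has multiplicity \<open>wk\<close>; \<open>cyc (-1) w1 w2 w3\<close> is the reversed cycle.\<close>

definition cyc :: "int \<Rightarrow> int \<Rightarrow> int \<Rightarrow> int \<Rightarrow> mat3" where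
  "cyc e w1 w2 w3 = S (- e * w3) (- e * w1) (e * w2)"

lemma weight_cyc:
  assumes "e \<in> {1, -1}"
  shows "weight (cyc e w1 w2 w3) 1 = \<bar>w1\<bar>" "weight (cyc e w1 w2 w3) (Suc 0) = \<bar>w1\<bar>"
    "weight (cyc e w1 w2 w3) 2 = \<bar>w2\<bar>"
    "weight (cyc e w1 w2 w3) 3 = \<bar>w3\<bar>"
  using assms by (auto simp: weight_def cyc_def)

lemma acyclic3_cyc:
  assumes "e \<in> {1, -1}"
  shows "\<not> acyclic3 (cyc e w1 w2 w3) \<longleftrightarrow> (w1 > 0 \<and> w2 > 0 \<and> w3 > 0) \<or> (w1 < 0 \<and> w2 < 0 \<and> w3 < 0)"
  using assms unfolding cyc_def acyclic3_S by auto

lemma mut1_cyc: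
  assumes "e \<in> {1, -1}" "w2 > 0" "w3 > 0"
  shows "mut 1 (cyc e w1 w2 w3) = cyc (-e) (w2 * w3 - w1) w2 w3"
  using assms unfolding cyc_def mut1_S by (auto simp: algebra_simps mult_pos_pos sgn_mult)

lemma mut2_cyc:
  assumes "e \<in> {1, -1}" "w1 > 0" "w3 > 0"
  shows "mut 2 (cyc e w1 w2 w3) = cyc (-e) w1 (w1 * w3 - w2) w3"
  using assms unfolding cyc_def mut2_S by (auto simp: algebra_simps mult_pos_pos sgn_mult)

lemma mut3_cyc:
  assumes "e \<in> {1, -1}" "w1 > 0" "w2 > 0"
  shows "mut 3 (cyc e w1 w2 w3) = cyc (-e) w1 w2 (w1 * w2 - w3)"
  using assms unfolding cyc_def mut3_S by (auto simp: algebra_simps mult_pos_pos sgn_mult)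

lemma cyclic_eq_cyc:
  assumes "skew3 B" "\<not> acyclic3 B"
  obtains e where "e \<in> {1, -1}" "B = cyc e (weight B 1) (weight B 2) (weight B 3)"
proof -
  define p q r where "p = B 2 1" and "q = B 3 2" and "r = B 3 1"
  have B: "B = S p q r"
    unfolding p_def q_def r_def by (rule skew3_eq_S[OF assms(1)])
  have "(p > 0 \<and> q > 0 \<and> r < 0) \<or> (p < 0 \<and> q < 0 \<and> r > 0)"
    using assms(2) unfolding B acyclic3_S by blast
  moreover have "weight B 1 = \<bar>q\<bar>" "weight B 2 = \<bar>r\<bar>" "weight B 3 = \<bar>p\<bar>"
    unfolding B by (simp_all add: weight_def)
  ultimately show thesis
    using that[of "-1"] that[of 1] unfolding B cyc_def by auto
qed

lemma weight_pos_cyclic: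
  assumes "skew3 B" "\<not> acyclic3 B"
  shows "weight B k > 0"
proof -
  obtain e where e: "e \<in> {1, -1}" and B: "B = cyc e (weight B 1) (weight B 2) (weight B 3)"
    using cyclic_eq_cyc[OF assms] .
  have "\<not> acyclic3 (cyc e (weight B 1) (weight B 2) (weight B 3))"
    using assms(2) B by simp
  then have "weight B 1 > 0 \<and> weight B 2 > 0 \<and> weight B 3 > 0"
    unfolding acyclic3_cyc[OF e] using weight_nonneg[of B 1] by linarith
  then show ?thesis
    by (auto simp: weight_def)
qed

lemma weight_mut_cyclic:
  assumes "skew3 B" "\<not> acyclic3 B" "k \<in> I3" "\<not> acyclic3 (mut k B)"
  shows "weight (mut k B) k = (\<Prod>j\<in>I3-{k}. weight B j) - weight B k"
proof -
  define w1 w2 w3 where "w1 = weight B 1" "w2 = weight B 2" "w3 = weight B 3"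
  obtain e where e: "e \<in> {1, -1}" and B: "B = cyc e w1 w2 w3"
    using cyclic_eq_cyc[OF assms(1,2)] unfolding w1_w2_w3_def .
  have pos: "w1 > 0" "w2 > 0" "w3 > 0"
    using weight_pos_cyclic[OF assms(1,2)] unfolding w1_w2_w3_def by blast+
  have e': "-e \<in> {1, -1}"
    using e by auto
  consider "k = 1" | "k = 2" | "k = 3"
    using I3_cases assms(3) by blast
  then show ?thesis
  proof cases
    case 1
    then have "mut k B = cyc (-e) (w2 * w3 - w1) w2 w3"
      using mut1_cyc[OF e pos(2,3)] B by simp
    then show ?thesis
      using assms(4) pos 1
      by (simp add: weight_cyc[OF e'] acyclic3_cyc[OF e'] I3_def insert_Diff_if w1_w2_w3_def)
  next
    case 2
    then have "mut k B = cyc (-e) w1 (w1 * w3 - w2) w3"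
      using mut2_cyc[OF e pos(1,3)] B by simp
    then show ?thesis
      using assms(4) pos 2
      by (simp add: weight_cyc[OF e'] acyclic3_cyc[OF e'] I3_def insert_Diff_if w1_w2_w3_def)
  next
    case 3
    then have "mut k B = cyc (-e) w1 w2 (w1 * w2 - w3)"
      using mut3_cyc[OF e pos(1,2)] B by simp
    then show ?thesis
      using assms(4) pos 3
      by (simp add: weight_cyc[OF e'] acyclic3_cyc[OF e'] I3_def insert_Diff_if w1_w2_w3_def)
  qed
qed

lemma markov_mut_cyclic:
  assumes "skew3 B" "\<not> acyclic3 B" "k \<in> I3" "\<not> acyclic3 (mut k B)"
  shows "markov (mut k B) = markov B"
proof -
  obtain i j where I: "I3 = {i, j, k}" "i \<noteq> j" "i \<noteq> k" "j \<noteq> k"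
    using I3_other_two[OF assms(3)] .
  then have "weight (mut k B) i = weight B i" "weight (mut k B) j = weight B j"
    using weight_mut_other[OF _ assms(3)] by auto
  moreover have "weight (mut k B) k = weight B i * weight B j - weight B k"
    using weight_mut_cyclic[OF assms] prod_other_two[OF I] by simp
  ultimately show ?thesis
    unfolding markov_split[OF I] by (simp only:) (simp add: power2_eq_square algebra_simps)
qed

lemma mut_class_skew3:
  assumes "skew3 A" "mut_class A B"
  shows "skew3 B"
  using assms(2) by induction (simp_all add: assms(1) skew3_mut)

locale mutation_cyclic3 =
  fixes A :: mat3
  assumes skew: "skew3 A" and mutation_cyclic: "mutation_cyclic A"
begin

lemma mut_class_cyclic: "mut_class A B \<Longrightarrow> \<not> acyclic3 B"
  using mutation_cyclic unfolding mutation_cyclic_def by blast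

lemma mut_class_markov: "mut_class A B \<Longrightarrow> markov B = markov A"
proof (induction rule: mut_class.induct)
  case (step B k)
  then show ?case
    using markov_mut_cyclic mut_class_skew3[OF skew] mut_class_cyclic mut_class.step by metis
qed simp

end

section \<open>Essential equivalence and the output of the algorithm\<close>

lemma ess_equiv_iff:
  "ess_equiv B C \<longleftrightarrow> (\<exists>\<sigma> s. bij_betw \<sigma> I3 I3 \<and> s \<in> {1, -1} \<and>
     (\<forall>i\<in>I3. \<forall>j\<in>I3. C i j = s * B (\<sigma> i) (\<sigma> j)))"
  unfolding ess_equiv_def
proof (rule iffI; elim exE conjE)
  fix \<sigma> assume \<sigma>: "bij_betw \<sigma> I3 I3"
    and "(\<forall>i\<in>I3. \<forall>j\<in>I3. C i j = B (\<sigma> i) (\<sigma> j)) \<or> (\<forall>i\<in>I3. \<forall>j\<in>I3. C i j = - B (\<sigma> i) (\<sigma> j))"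
  then consider "\<forall>i\<in>I3. \<forall>j\<in>I3. C i j = 1 * B (\<sigma> i) (\<sigma> j)"
    | "\<forall>i\<in>I3. \<forall>j\<in>I3. C i j = -1 * B (\<sigma> i) (\<sigma> j)"
    by auto
  then show "\<exists>\<sigma> s. bij_betw \<sigma> I3 I3 \<and> s \<in> {1, -1} \<and> (\<forall>i\<in>I3. \<forall>j\<in>I3. C i j = s * B (\<sigma> i) (\<sigma> j))"
    using \<sigma> by cases blast+
qed auto

lemma ess_equivI:
  assumes "bij_betw \<sigma> I3 I3" "s \<in> {1, -1}" "\<And>i j. i \<in> I3 \<Longrightarrow> j \<in> I3 \<Longrightarrow> C i j = s * B (\<sigma> i) (\<sigma> j)"
  shows "ess_equiv B C"
  unfolding ess_equiv_iff using assms by blast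

lemma ess_equiv_refl: "ess_equiv B B"
  by (rule ess_equivI[of id 1]) auto

lemma ess_equiv_trans:
  assumes "ess_equiv B C" "ess_equiv C D"
  shows "ess_equiv B D"
proof -
  obtain \<sigma> s where \<sigma>: "bij_betw \<sigma> I3 I3" "s \<in> {1, -1}" "\<forall>i\<in>I3. \<forall>j\<in>I3. C i j = s * B (\<sigma> i) (\<sigma> j)"
    using assms(1) unfolding ess_equiv_iff by blast
  obtain \<tau> t where \<tau>: "bij_betw \<tau> I3 I3" "t \<in> {1, -1}" "\<forall>i\<in>I3. \<forall>j\<in>I3. D i j = t * C (\<tau> i) (\<tau> j)"
    using assms(2) unfolding ess_equiv_iff by blast
  show ?thesis
  proof (rule ess_equivI[of "\<sigma> \<circ> \<tau>" "t * s"])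
    show "bij_betw (\<sigma> \<circ> \<tau>) I3 I3" using \<sigma>(1) \<tau>(1) by (rule bij_betw_trans[rotated])
    show "t * s \<in> {1, -1}" using \<sigma>(2) \<tau>(2) by auto
    fix i j assume "i \<in> I3" "j \<in> I3"
    then show "D i j = t * s * B ((\<sigma> \<circ> \<tau>) i) ((\<sigma> \<circ> \<tau>) j)"
      using \<tau>(3) \<sigma>(3) bij_betwE[OF \<tau>(1)] by simp
  qed
qed

lemma ess_equiv_mut:
  assumes "ess_equiv B C" "k \<in> I3"
  obtains k' where "k' \<in> I3" "ess_equiv (mut k' B) (mut k C)"
proof -
  obtain \<sigma> s where \<sigma>: "bij_betw \<sigma> I3 I3" "s \<in> {1, -1}" "\<forall>i\<in>I3. \<forall>j\<in>I3. C i j = s * B (\<sigma> i) (\<sigma> j)"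
    using assms(1) unfolding ess_equiv_iff by blast
  have in_I3: "\<sigma> i \<in> I3" if "i \<in> I3" for i
    using \<sigma>(1) that by (meson bij_betwE)
  have inj: "\<sigma> i = \<sigma> j \<longleftrightarrow> i = j" if "i \<in> I3" "j \<in> I3" for i j
    using \<sigma>(1) that unfolding bij_betw_def inj_on_def by blast
  have "mut k C i j = s * mut (\<sigma> k) B (\<sigma> i) (\<sigma> j)" if i: "i \<in> I3" and j: "j \<in> I3" for i j
  proof -
    have C: "C i j = s * B (\<sigma> i) (\<sigma> j)" "C i k = s * B (\<sigma> i) (\<sigma> k)" "C k j = s * B (\<sigma> k) (\<sigma> j)"
      using \<sigma>(3) i j assms(2) by auto
    have "sgn (C i k) * max (C i k * C k j) 0
      = s * (sgn (B (\<sigma> i) (\<sigma> k)) * max (B (\<sigma> i) (\<sigma> k) * B (\<sigma> k) (\<sigma> j)) 0)"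
      unfolding C(2,3) using \<sigma>(2) by (auto simp: sgn_minus)
    then show ?thesis
      using i j assms(2) in_I3 inj[OF i assms(2)] inj[OF j assms(2)]
      by (auto simp: mut_def C(1) ring_distribs)
  qed
  then have "ess_equiv (mut (\<sigma> k) B) (mut k C)"
    using \<sigma>(1,2) by (intro ess_equivI) auto
  then show thesis
    using that in_I3[OF assms(2)] by blast
qed

lemma ess_equiv_acyclic3:
  assumes "ess_equiv B C" "acyclic3 C"
  shows "acyclic3 B"
proof -
  obtain \<sigma> s where \<sigma>: "bij_betw \<sigma> I3 I3" "s \<in> {1, -1}" "\<forall>i\<in>I3. \<forall>j\<in>I3. C i j = s * B (\<sigma> i) (\<sigma> j)"
    using assms(1) unfolding ess_equiv_iff by blast
  obtain j where j: "j \<in> I3" and col: "(\<forall>i\<in>I3. C i j \<ge> 0) \<or> (\<forall>i\<in>I3. C i j \<le> 0)"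
    using assms(2) unfolding acyclic3_def by blast
  have "B (\<sigma> i) (\<sigma> j) = s * C i j" if "i \<in> I3" for i
    using \<sigma>(2,3) that j by auto
  then have "(\<forall>i\<in>I3. B (\<sigma> i) (\<sigma> j) \<ge> 0) \<or> (\<forall>i\<in>I3. B (\<sigma> i) (\<sigma> j) \<le> 0)"
    using col \<sigma>(2) by auto
  moreover have "\<sigma> ` I3 = I3" "\<sigma> j \<in> I3"
    using \<sigma>(1) j by (auto simp: bij_betw_def)
  ultimately show ?thesis
    unfolding acyclic3_def by (metis image_eqI imageE)
qed

lemma ess_equiv_weight:
  assumes "skew3 B" "ess_equiv B C"
  obtains \<sigma> where "bij_betw \<sigma> I3 I3" "\<forall>k\<in>I3. weight C k = weight B (\<sigma> k)"
proof -
  obtain \<sigma> s where \<sigma>: "bij_betw \<sigma> I3 I3" "s \<in> {1, -1}" "\<forall>i\<in>I3. \<forall>j\<in>I3. C i j = s * B (\<sigma> i) (\<sigma> j)"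
    using assms(2) unfolding ess_equiv_iff by blast
  have abs_C: "\<bar>C i j\<bar> = \<bar>B (\<sigma> i) (\<sigma> j)\<bar>" if "i \<in> I3" "j \<in> I3" for i j
    using \<sigma>(2,3) that by (auto simp: abs_mult)
  have in_I3: "\<sigma> 1 \<in> I3" "\<sigma> 2 \<in> I3" "\<sigma> 3 \<in> I3"
    using bij_betwE[OF \<sigma>(1)] by auto
  have distinct: "\<sigma> 1 \<noteq> \<sigma> 2" "\<sigma> 1 \<noteq> \<sigma> 3" "\<sigma> 2 \<noteq> \<sigma> 3"
    using \<sigma>(1) unfolding bij_betw_def inj_on_def by (auto simp: I3_def)
  have "weight C 1 = weight B (\<sigma> 1)" "weight C 2 = weight B (\<sigma> 2)" "weight C 3 = weight B (\<sigma> 3)"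
    using weight_eq_abs_entry[OF assms(1) in_I3(2,3,1)]
      weight_eq_abs_entry[OF assms(1) in_I3(1,3,2)]
      weight_eq_abs_entry[OF assms(1) in_I3(1,2,3)] distinct abs_C
    by (auto simp: weight_def)
  then show thesis
    using that[OF \<sigma>(1)] I3_cases by metis
qed

lemma markov_ess_equiv:
  assumes "skew3 B" "ess_equiv B C"
  shows "markov C = markov B"
proof -
  obtain \<sigma> where \<sigma>: "bij_betw \<sigma> I3 I3" "\<forall>k\<in>I3. weight C k = weight B (\<sigma> k)"
    using ess_equiv_weight[OF assms] by blast
  have "markov C = (\<Sum>k\<in>I3. weight B (\<sigma> k) ^ 2) - (\<Prod>k\<in>I3. weight B (\<sigma> k))"
    unfolding markov_def using \<sigma>(2) by simp
  also have "\<dots> = markov B"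
    unfolding markov_def
    using sum.reindex_bij_betw[OF \<sigma>(1), of "\<lambda>k. weight B k ^ 2"]
      prod.reindex_bij_betw[OF \<sigma>(1), of "weight B"]
    by simp
  finally show ?thesis .
qed

lemma ess_equiv_cyc_rotate: "ess_equiv (cyc e w1 w2 w3) (cyc e w2 w3 w1)"
proof (rule ess_equivI[of "\<lambda>i. if i = 1 then 2 else if i = 2 then 3 else if i = 3 then 1 else i" 1])
  show "bij_betw (\<lambda>i. if i = 1 then 2 else if i = 2 then 3 else if i = 3 then 1 else i) I3 I3"
    by (auto simp: bij_betw_def inj_on_def I3_def)
qed (auto simp: I3_def cyc_def)

lemma ess_equiv_cyc_swap: "ess_equiv (cyc e w1 w2 w3) (cyc (-e) w2 w1 w3)"
proof (rule ess_equivI[of "\<lambda>i. if i = 1 then 2 else if i = 2 then 1 else i" 1])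
  show "bij_betw (\<lambda>i. if i = 1 then 2 else if i = 2 then 1 else i) I3 I3"
    by (auto simp: bij_betw_def inj_on_def I3_def)
qed (auto simp: I3_def cyc_def)

lemma ess_equiv_cyc_sign: "ess_equiv (cyc e w1 w2 w3) (cyc (-e) w1 w2 w3)"
  by (rule ess_equivI[of id "-1"]) (auto simp: I3_def cyc_def)

lemma ess_equiv_cyc_perm:
  assumes "e \<in> {1, -1}" "e' \<in> {1, -1}"
    and "(v1, v2, v3) \<in> {(w1, w2, w3), (w2, w3, w1), (w3, w1, w2),
      (w2, w1, w3), (w3, w2, w1), (w1, w3, w2)}"
  shows "ess_equiv (cyc e w1 w2 w3) (cyc e' v1 v2 v3)"
proof -
  let ?reach = "\<lambda>u1 u2 u3. \<forall>f\<in>{1, -1}. ess_equiv (cyc e w1 w2 w3) (cyc f u1 u2 u3)"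
  have start: "?reach w1 w2 w3"
    using assms(1) ess_equiv_refl ess_equiv_cyc_sign[of e] by auto
  have rotate: "?reach u2 u3 u1" if "?reach u1 u2 u3" for u1 u2 u3
    using that ess_equiv_trans ess_equiv_cyc_rotate by blast
  have swap: "?reach u2 u1 u3" if "?reach u1 u2 u3" for u1 u2 u3
  proof
    fix f :: int assume "f \<in> {1, -1}"
    then have "ess_equiv (cyc e w1 w2 w3) (cyc (-f) u1 u2 u3)"
      using that by auto
    then show "ess_equiv (cyc e w1 w2 w3) (cyc f u2 u1 u3)"
      using ess_equiv_trans ess_equiv_cyc_swap[of "-f" u1 u2 u3] by simp
  qed
  show ?thesis
    using assms(2,3) start rotate[OF start] rotate[OF rotate[OF start]]
      swap[OF start] swap[OF rotate[OF start]] swap[OF rotate[OF rotate[OF start]]]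
    by (elim insertE emptyE) auto
qed

lemma ess_equiv_std_form:
  assumes "skew3 A" "\<not> acyclic3 A"
  shows "ess_equiv A (std_form A)"
proof -
  define w1 w2 w3 where "w1 = weight A 1" "w2 = weight A 2" "w3 = weight A 3"
  obtain e where e: "e \<in> {1, -1}" and A: "A = cyc e w1 w2 w3"
    using cyclic_eq_cyc[OF assms] unfolding w1_w2_w3_def .
  have "w1 \<ge> 0" "w2 \<ge> 0" "w3 \<ge> 0"
    unfolding w1_w2_w3_def by (simp_all add: weight_nonneg)
  then have entries: "[\<bar>A 1 2\<bar>, \<bar>A 1 3\<bar>, \<bar>A 2 3\<bar>] = [w3, w2, w1]"
    using e unfolding A cyc_def by (auto simp: abs_mult)
  define l where "l = sort [w3, w2, w1]"
  have "(l ! 1, l ! 0, l ! 2) \<in> {(w1, w2, w3), (w2, w3, w1), (w3, w1, w2),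
      (w2, w1, w3), (w3, w2, w1), (w1, w3, w2)}"
    unfolding l_def by (cases "w1 \<le> w2"; cases "w2 \<le> w3"; cases "w1 \<le> w3") auto
  from ess_equiv_cyc_perm[OF e _ this, of 1]
  have "ess_equiv A (S (- (l ! 2)) (- (l ! 1)) (l ! 0))"
    unfolding A by (simp add: cyc_def)
  then show ?thesis
    unfolding std_form_def Let_def entries l_def[symmetric] by simp
qed

lemma markov_S: "markov (S (-d) (-e) f) = \<bar>d\<bar> ^ 2 + \<bar>e\<bar> ^ 2 + \<bar>f\<bar> ^ 2 - \<bar>d\<bar> * \<bar>e\<bar> * \<bar>f\<bar>"
  by (simp add: markov_def weight_def I3_def algebra_simps)

lemma markov_nonpos_root:
  fixes d e f :: int
  assumes "e \<le> d" "f \<le> e" "3 \<le> f" "e \<le> e * f - d"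
  shows "d ^ 2 + e ^ 2 + f ^ 2 - d * e * f \<le> 0"
proof -
  have "(d - e) * (e * f - d - e) \<ge> 0" "e ^ 2 * (f - 3) \<ge> 0" "e ^ 2 \<ge> f ^ 2"
    using assms by (simp_all add: power_mono)
  then show ?thesis
    by (simp add: power2_eq_square algebra_simps)
qed

context mutation_cyclic3
begin

text \<open>The algorithm only applies \<open>\<mu>3\<close> and essential equivalences, so every matrix it computes
  from \<open>A\<close> lies in this class.\<close>

definition ess_mut_class :: "mat3 \<Rightarrow> bool" where
  "ess_mut_class B \<longleftrightarrow> (\<exists>B0. mut_class A B0 \<and> ess_equiv B0 B)"

lemma ess_mut_class_ess_equiv: "ess_mut_class B \<Longrightarrow> ess_equiv B C \<Longrightarrow> ess_mut_class C"
  unfolding ess_mut_class_def using ess_equiv_trans by blast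

lemma ess_mut_class_mut3:
  assumes "ess_mut_class B"
  shows "ess_mut_class (mut 3 B)"
proof -
  obtain B0 where B0: "mut_class A B0" "ess_equiv B0 B"
    using assms unfolding ess_mut_class_def by blast
  obtain k where "k \<in> I3" "ess_equiv (mut k B0) (mut 3 B)"
    using ess_equiv_mut[OF B0(2), of 3] by auto
  then show ?thesis
    unfolding ess_mut_class_def using B0(1) mut_class.step by blast
qed

lemma ess_mut_class_cyclic: "ess_mut_class B \<Longrightarrow> \<not> acyclic3 B"
  unfolding ess_mut_class_def using ess_equiv_acyclic3 mut_class_cyclic by blast

lemma ess_mut_class_markov: "ess_mut_class B \<Longrightarrow> markov B = markov A"
  unfolding ess_mut_class_def
  using markov_ess_equiv mut_class_skew3[OF skew] mut_class_markov by metis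

lemma fail_run_impossible: "fail_run B M \<Longrightarrow> \<not> ess_mut_class B"
  by (induction rule: fail_run.induct)
    (use ess_mut_class_cyclic ess_mut_class_mut3 ess_mut_class_ess_equiv in blast)+

lemma run2_passes:
  "run2 B M \<Longrightarrow> ess_mut_class B \<Longrightarrow> \<exists>d e f. ess_mut_class (S (-d) (-e) f) \<and> M = out_of d e f \<and>
     e \<le> d \<and> f \<le> e \<and> 2 \<le> f \<and> e \<le> e * f - d"
proof (induction rule: run2.induct)
  case (pass B d e f)
  then show ?case
    using ess_mut_class_mut3 ess_mut_class_ess_equiv by fastforce
next
  case (cont B d e f M)
  then show ?case
    using ess_mut_class_mut3 ess_mut_class_ess_equiv by blast
qed (use fail_run_impossible ess_mut_class_mut3 ess_mut_class_ess_equiv in blast)+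

lemma m_out_passes:
  assumes "m_out A M"
  shows "\<exists>d e f. ess_mut_class (S (-d) (-e) f) \<and> M = out_of d e f \<and>
     e \<le> d \<and> f \<le> e \<and> 2 \<le> f \<and> e \<le> e * f - d"
proof -
  define A1 where "A1 = std_form A"
  define a b c where "a = - A1 2 1" "b = - A1 3 2" "c = A1 3 1"
  have A1: "ess_mut_class A1"
    unfolding ess_mut_class_def A1_def
    using ess_equiv_std_form[OF skew mut_class_cyclic[OF mut_class.refl]] mut_class.refl by blast
  have "skew3 A1"
    unfolding A1_def std_form_def Let_def by (simp add: skew3_S)
  then have "A1 = S (-a) (-b) c"
    unfolding a_b_c_def minus_minus by (rule skew3_eq_S)
  show ?thesis
  proof (cases "a \<ge> b \<and> b \<ge> c \<and> c \<ge> 2 \<and> b * c - a \<ge> b")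
    case True
    then have "M = out_of a b c"
      using assms unfolding m_out_def A1_def[symmetric] a_b_c_def[symmetric] Let_def by simp
    then show ?thesis
      using True A1 \<open>A1 = S (-a) (-b) c\<close> by auto
  next
    case False
    then have "if acyclic3 A1 \<or> c \<le> 2 then fail_run A1 M else run2 A1 M"
      using assms unfolding m_out_def A1_def[symmetric] a_b_c_def[symmetric] Let_def by simp
    then show ?thesis
      using A1 fail_run_impossible run2_passes by (auto split: if_splits)
  qed
qed

lemma markov_nonpos_of_m_out:
  assumes "m_out A (S (-a) (-b) c) \<or> m_out A (negm (S (-a) (-b) c))" and "c > 2"
  shows "markov A \<le> 0"
proof -
  obtain M where M: "m_out A M" and "M 3 1 = c \<or> M 3 1 = - c"
    using assms(1) unfolding negm_def by auto
  moreover obtain d e f where "ess_mut_class (S (-d) (-e) f)" "M = out_of d e f"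
    and ineqs: "e \<le> d" "f \<le> e" "2 \<le> f" "e \<le> e * f - d"
    using m_out_passes[OF M] by blast
  moreover have "out_of d e f 3 1 = f \<or> out_of d e f 3 1 = - f"
    unfolding out_of_def mut3_S by simp
  ultimately have "f = c" "markov A = markov (S (-d) (-e) f)"
    using assms(2) ess_mut_class_markov by auto
  then show ?thesis
    using markov_nonpos_root[OF ineqs(1,2) _ ineqs(4)] ineqs assms(2) by (simp add: markov_S)
qed

end

section \<open>Seeds reached along reduced words\<close>

text \<open>Cluster variables are encoded as functions that vanish off the positive orthant; mutating
  twice gives back exactly these zeros only if they are recorded in the invariant.\<close>

definition positive_cluster :: "(nat \<Rightarrow> cvar) \<Rightarrow> bool" where
  "positive_cluster x \<longleftrightarrow> (\<forall>i\<in>I3. \<forall>p. (pos3 p \<longrightarrow> x i p > 0) \<and> (\<not> pos3 p \<longrightarrow> x i p = 0))"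

lemma positive_cluster_x0: "positive_cluster x0"
  unfolding positive_cluster_def x0_def pos3_def by auto

lemma positive_cluster_mut:
  assumes "positive_cluster x" "k \<in> I3"
  shows "positive_cluster (mut_cluster k B x)"
proof -
  have "(\<Prod>i\<in>{i\<in>I3. B i k > 0}. x i p ^ nat (B i k)) > 0"
    "(\<Prod>i\<in>{i\<in>I3. B i k < 0}. x i p ^ nat (- B i k)) > 0"
    if "pos3 p" for p
    using assms(1) that unfolding positive_cluster_def by (auto intro!: prod_pos)
  moreover have "x k p > 0" if "pos3 p" for p
    using assms that unfolding positive_cluster_def by blast
  ultimately show ?thesis
    using assms unfolding positive_cluster_def mut_cluster_def
    by (auto intro!: divide_pos_pos add_pos_pos)
qed

lemma mut_cluster_involutive:
  assumes "skew3 B" "k \<in> I3" "positive_cluster x"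
  shows "mut_cluster k (mut k B) (mut_cluster k B x) = x"
proof (intro ext)
  fix j p
  define x' where "x' = mut_cluster k B x"
  have x': "x' i = x i" if "B i k \<noteq> 0" for i
    using that skew3_diag[OF assms(1), of k] unfolding x'_def mut_cluster_def by auto
  have col: "mut k B i k = - B i k" if "i \<in> I3" for i
    using that assms(2) unfolding mut_def by simp
  define P where "P = (\<Prod>i\<in>{i\<in>I3. B i k > 0}. x i p ^ nat (B i k))"
  define N where "N = (\<Prod>i\<in>{i\<in>I3. B i k < 0}. x i p ^ nat (- B i k))"
  have P': "(\<Prod>i\<in>{i\<in>I3. mut k B i k < 0}. x' i p ^ nat (- mut k B i k)) = P"
    unfolding P_def using col x' by (intro prod.cong) auto
  have N': "(\<Prod>i\<in>{i\<in>I3. mut k B i k > 0}. x' i p ^ nat (mut k B i k)) = N"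
    unfolding N_def using col x' by (intro prod.cong) auto
  show "mut_cluster k (mut k B) x' j p = x j p"
  proof (cases "j = k \<and> pos3 p")
    case True
    have "P > 0" "N > 0" "x k p > 0"
      using assms(2,3) True unfolding P_def N_def positive_cluster_def by (auto intro!: prod_pos)
    have "mut_cluster k (mut k B) x' j p = (N + P) / x' k p"
      using True P' N' unfolding mut_cluster_def by simp
    also have "x' k p = (P + N) / x k p"
      using True unfolding x'_def mut_cluster_def P_def N_def by simp
    finally show ?thesis
      using True \<open>P > 0\<close> \<open>N > 0\<close> \<open>x k p > 0\<close> by (simp add: add.commute)
  next
    case False
    then show ?thesis
      using assms(2,3) unfolding x'_def mut_cluster_def positive_cluster_def by auto
  qed
qed

definition word_seed :: "mat3 \<Rightarrow> nat list \<Rightarrow> (nat \<Rightarrow> cvar) \<times> mat3" where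
  "word_seed A ws = foldl (\<lambda>(x, B) k. (mut_cluster k B x, mut k B)) (x0, A) ws"

abbreviation word_cluster :: "mat3 \<Rightarrow> nat list \<Rightarrow> nat \<Rightarrow> cvar" where
  "word_cluster A ws \<equiv> fst (word_seed A ws)"

abbreviation word_matrix :: "mat3 \<Rightarrow> nat list \<Rightarrow> mat3" where
  "word_matrix A ws \<equiv> snd (word_seed A ws)"

lemma word_seed_Nil [simp]: "word_seed A [] = (x0, A)"
  by (simp add: word_seed_def)

lemma word_seed_snoc [simp]:
  "word_seed A (ws @ [k])
    = (mut_cluster k (word_matrix A ws) (word_cluster A ws), mut k (word_matrix A ws))"
  by (simp add: word_seed_def split_beta)

lemma word_matrix_mut_class: "set ws \<subseteq> I3 \<Longrightarrow> mut_class A (word_matrix A ws)"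
  by (induction ws rule: rev_induct) (auto intro: mut_class.intros)

lemma word_cluster_positive: "set ws \<subseteq> I3 \<Longrightarrow> positive_cluster (word_cluster A ws)"
  by (induction ws rule: rev_induct) (auto simp: positive_cluster_x0 positive_cluster_mut)

lemma word_seed_cancel:
  assumes "skew3 A" "set ws \<subseteq> I3" "k \<in> I3"
  shows "word_seed A (ws @ [k, k]) = word_seed A ws"
proof -
  let ?x = "word_cluster A ws" and ?B = "word_matrix A ws"
  have "skew3 ?B"
    using mut_class_skew3[OF assms(1) word_matrix_mut_class[OF assms(2)]] .
  have "word_seed A (ws @ [k, k]) = word_seed A ((ws @ [k]) @ [k])"
    by simp
  also have "\<dots> = (mut_cluster k (mut k ?B) (mut_cluster k ?B ?x), mut k (mut k ?B))"
    by (simp del: append_assoc)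
  also have "\<dots> = word_seed A ws"
    using mut_involutive[OF \<open>skew3 ?B\<close>] mut_cluster_involutive[OF \<open>skew3 ?B\<close> assms(3)]
      word_cluster_positive[OF assms(2)] by simp
  finally show ?thesis .
qed

lemma seed_reach_reduced_word:
  assumes "skew3 A" "seed_reach A g x B h"
  shows "\<exists>ws. set ws \<subseteq> I3 \<and> distinct_adj ws \<and> word_seed A ws = (x, B)"
  using assms(2)
proof (induction rule: seed_reach.induct)
  case init
  show ?case by (intro exI[of _ "[]"]) simp
next
  case (step x B h k)
  then obtain ws where ws: "set ws \<subseteq> I3" "distinct_adj ws" "word_seed A ws = (x, B)"
    by blast
  show ?case
  proof (cases "ws \<noteq> [] \<and> last ws = k")
    case True
    then obtain ws0 where ws0: "ws = ws0 @ [k]"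
      by (metis append_butlast_last_id)
    have "word_seed A ws0 = word_seed A (ws0 @ [k, k])"
      using word_seed_cancel[OF assms(1), of ws0 k] ws(1) step.hyps(2) unfolding ws0 by simp
    also have "\<dots> = word_seed A (ws @ [k])"
      unfolding ws0 by simp
    also have "\<dots> = (mut_cluster k B x, mut k B)"
      using ws(3) by simp
    finally show ?thesis
      using ws(1,2) unfolding ws0 by (intro exI[of _ ws0]) auto
  next
    case False
    then show ?thesis
      using ws step.hyps(2) by (intro exI[of _ "ws @ [k]"]) (auto simp: distinct_adj_append_iff)
  qed
qed

section \<open>Growth of weights when the Markov constant is nonpositive\<close>

lemma markov_triple_ge3:
  fixes a b c :: int
  assumes "a > 0" "b > 0" "c > 0" "a ^ 2 + b ^ 2 + c ^ 2 - a * b * c \<le> 0"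
  shows "c \<ge> 3"
proof (rule ccontr)
  assume "\<not> c \<ge> 3"
  then have "a * b * c \<le> a * b * 2"
    using assms(1,2) by (simp add: mult_left_mono)
  moreover have "a * b * 2 \<le> a * a + b * b"
    using zero_le_power2[of "a - b"] by (simp add: power2_eq_square algebra_simps)
  moreover have "c * c > 0"
    using assms(3) by simp
  ultimately show False
    using assms(4) unfolding power2_eq_square by linarith
qed

definition max_weight :: "mat3 \<Rightarrow> int" where
  "max_weight B = Max (weight B ` I3)"

definition top_weight :: "mat3 \<Rightarrow> nat \<Rightarrow> bool" where
  "top_weight B k \<longleftrightarrow> (\<forall>j\<in>I3. j \<noteq> k \<longrightarrow> weight B j < weight B k)"

lemma weight_le_max_weight: "j \<in> I3 \<Longrightarrow> weight B j \<le> max_weight B"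
  unfolding max_weight_def by (intro Max_ge) (auto simp: I3_def)

lemma max_weight_less_iff: "max_weight B < n \<longleftrightarrow> (\<forall>j\<in>I3. weight B j < n)"
  unfolding max_weight_def by (simp add: I3_def)

lemma max_weight_top_weight: "k \<in> I3 \<Longrightarrow> top_weight B k \<Longrightarrow> max_weight B = weight B k"
  unfolding max_weight_def top_weight_def by (intro Max_eqI) (auto simp: I3_def less_imp_le)

lemma top_weight_unique: "top_weight B j \<Longrightarrow> top_weight B k \<Longrightarrow> j \<in> I3 \<Longrightarrow> k \<in> I3 \<Longrightarrow> j = k"
  unfolding top_weight_def by force

lemma top_weight_mut:
  assumes "k \<in> I3" "\<And>j. j \<in> I3 \<Longrightarrow> j \<noteq> k \<Longrightarrow> weight B j < weight (mut k B) k"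
  shows "top_weight (mut k B) k"
  unfolding top_weight_def using assms weight_mut_other by simp

locale markov_mutation_cyclic3 = mutation_cyclic3 +
  assumes markov_nonpos: "markov A \<le> 0"
begin

lemma mut_class_weight_ge3:
  assumes "mut_class A B" "k \<in> I3"
  shows "weight B k \<ge> 3"
proof -
  obtain i j where I: "I3 = {i, j, k}" "i \<noteq> j" "i \<noteq> k" "j \<noteq> k"
    using I3_other_two[OF assms(2)] .
  have "markov B \<le> 0"
    using mut_class_markov[OF assms(1)] markov_nonpos by simp
  then show ?thesis
    unfolding markov_split[OF I]
    using weight_pos_cyclic[OF mut_class_skew3[OF skew assms(1)] mut_class_cyclic[OF assms(1)]]
    by (intro markov_triple_ge3[of "weight B i" "weight B j"]) auto
qed

lemma mut_class_weight_mut: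
  assumes "mut_class A B" "I3 = {i, j, k}" "i \<noteq> j" "i \<noteq> k" "j \<noteq> k"
  shows "weight (mut k B) k = weight B i * weight B j - weight B k"
proof -
  have "k \<in> I3" using assms(2) by blast
  with assms(1) show ?thesis
    using weight_mut_cyclic[OF mut_class_skew3[OF skew assms(1)] mut_class_cyclic[OF assms(1)]]
      mut_class_cyclic[OF mut_class.step] prod_other_two[OF assms(2-)] by metis
qed

lemma mut_ascends:
  assumes "mut_class A B" "k \<in> I3" "\<not> top_weight B k"
  shows "max_weight B < weight (mut k B) k"
proof -
  obtain i j where I: "I3 = {i, j, k}" "i \<noteq> j" "i \<noteq> k" "j \<noteq> k"
    using I3_other_two[OF assms(2)] .
  have ge3: "weight B i \<ge> 3" "weight B j \<ge> 3" "weight B k \<ge> 3"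
    using mut_class_weight_ge3[OF assms(1)] I(1) by auto
  have "weight B i * weight B j \<ge> 3 * weight B i" "weight B i * weight B j \<ge> 3 * weight B j"
    using ge3 mult_right_mono[of 3 "weight B j" "weight B i"]
      mult_left_mono[of 3 "weight B i" "weight B j"]
    by simp_all
  moreover have "weight B k \<le> weight B i \<or> weight B k \<le> weight B j"
    using assms(3) unfolding top_weight_def I(1) by auto
  ultimately have "weight B i < weight B i * weight B j - weight B k \<and>
      weight B j < weight B i * weight B j - weight B k \<and>
      weight B k < weight B i * weight B j - weight B k"
    using ge3 by (elim disjE; intro conjI; linarith)
  then show ?thesis
    unfolding max_weight_less_iff mut_class_weight_mut[OF assms(1) I] I(1) by simp
qed

lemma mut_class_max_weight_ge3: "mut_class A B \<Longrightarrow> max_weight B \<ge> 3"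
  using mut_class_weight_ge3[of B 1] weight_le_max_weight[of 1 B] by simp

text \<open>The two phases of a reduced word: while descending, every step has lowered the maximal weight;
  while ascending, every step raises it and leaves the largest weight at the vertex just mutated.\<close>

definition descending :: "nat list \<Rightarrow> bool" where
  "descending ws \<longleftrightarrow> int (length ws) + max_weight (word_matrix A ws) \<le> max_weight A"

definition ascending :: "nat list \<Rightarrow> bool" where
  "ascending ws \<longleftrightarrow> ws \<noteq> [] \<and> top_weight (word_matrix A ws) (last ws) \<and>
     int (length ws) \<le> max_weight A + max_weight (word_matrix A ws)"

lemma ascending_snoc:
  assumes "set ws \<subseteq> I3" "k \<in> I3" "descending ws \<or> ascending ws" "\<not> top_weight (word_matrix A ws) k"
  shows "ascending (ws @ [k])"
proof -
  let ?B = "word_matrix A ws"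
  have B: "mut_class A ?B"
    using assms(1) by (rule word_matrix_mut_class)
  have up: "max_weight ?B < weight (mut k ?B) k"
    using mut_ascends[OF B assms(2,4)] .
  then have top: "top_weight (mut k ?B) k"
    by (intro top_weight_mut[OF assms(2)]) (meson le_less_trans weight_le_max_weight)
  have "int (length ws) \<le> max_weight A + max_weight ?B"
    using assms(3) mut_class_max_weight_ge3[OF B] unfolding descending_def ascending_def by auto
  then show ?thesis
    unfolding ascending_def using top up max_weight_top_weight[OF assms(2) top] by simp
qed

lemma top_snoc:
  assumes "set ws \<subseteq> I3" "k \<in> I3" "descending ws" "top_weight (word_matrix A ws) k"
  shows "descending (ws @ [k]) \<or> ascending (ws @ [k])"
proof -
  let ?B = "word_matrix A ws"
  have B: "mut_class A ?B"
    using assms(1) by (rule word_matrix_mut_class)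
  have max: "max_weight ?B = weight ?B k"
    using max_weight_top_weight[OF assms(2,4)] .
  have others: "weight (mut k ?B) j < max_weight ?B" if "j \<in> I3" "j \<noteq> k" for j
    using assms(4) that weight_mut_other[OF that(1) assms(2) that(2)] max unfolding top_weight_def
    by simp
  show ?thesis
  proof (cases "weight (mut k ?B) k < max_weight ?B")
    case True
    then have "max_weight (mut k ?B) < max_weight ?B"
      using others unfolding max_weight_less_iff by metis
    then show ?thesis
      using assms(3) unfolding descending_def by simp
  next
    case False
    then have top: "top_weight (mut k ?B) k"
      by (intro top_weight_mut[OF assms(2)]) (use assms(4) max in \<open>auto simp: top_weight_def\<close>)
    have "max_weight ?B \<ge> 3"
      using mut_class_max_weight_ge3[OF B] .
    then have "ascending (ws @ [k])"
      using assms(3) False max_weight_top_weight[OF assms(2) top]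
      unfolding descending_def ascending_def
      by (simp add: top)
    then show ?thesis ..
  qed
qed

lemma reduced_word_profile: "set ws \<subseteq> I3 \<Longrightarrow> distinct_adj ws \<Longrightarrow> descending ws \<or> ascending ws"
proof (induction ws rule: rev_induct)
  case Nil
  show ?case
    by (simp add: descending_def)
next
  case (snoc k ws)
  then have ws: "set ws \<subseteq> I3" "k \<in> I3" "descending ws \<or> ascending ws" "ws = [] \<or> last ws \<noteq> k"
    by (auto simp: distinct_adj_append_iff)
  show ?case
  proof (cases "top_weight (word_matrix A ws) k")
    case True
    have "\<not> ascending ws"
    proof
      assume "ascending ws"
      then have "ws \<noteq> []" "top_weight (word_matrix A ws) (last ws)"
        unfolding ascending_def by auto
      moreover have "last ws \<in> I3"
        using ws(1) \<open>ws \<noteq> []\<close> by auto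
      ultimately show False
        using top_weight_unique[OF _ True _ ws(2)] ws(4) by blast
    qed
    then show ?thesis
      using top_snoc[OF ws(1,2) _ True] ws(3) by blast
  next
    case False
    then show ?thesis
      using ascending_snoc[OF ws(1-3)] by blast
  qed
qed

lemma reduced_word_length:
  assumes "set ws \<subseteq> I3" "distinct_adj ws" "ws \<noteq> []"
  shows "int (length ws) \<le> max_weight A + weight (word_matrix A ws) (last ws)"
proof -
  have "last ws \<in> I3"
    using assms(1,3) by auto
  then show ?thesis
    using reduced_word_profile[OF assms(1,2)] max_weight_top_weight[of "last ws"]
      mut_class_max_weight_ge3[OF word_matrix_mut_class[OF assms(1)]]
      weight_nonneg[of "word_matrix A ws" "last ws"]
    unfolding descending_def ascending_def by auto
qed

text \<open>The variable at \<open>i\<close> was created by the last mutation at \<open>i\<close>, so the prefix ending there is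
  bounded by \<open>reduced_word_length\<close>.\<close>

lemma reduced_word_cluster_variable:
  "set ws \<subseteq> I3 \<Longrightarrow> distinct_adj ws \<Longrightarrow> i \<in> I3 \<Longrightarrow>
     \<exists>vs. set vs \<subseteq> I3 \<and> int (length vs) \<le> max_weight A + weight (word_matrix A ws) i \<and>
       word_cluster A vs i = word_cluster A ws i"
proof (induction ws rule: rev_induct)
  case Nil
  have "0 \<le> max_weight A"
    using mut_class_max_weight_ge3[OF mut_class.refl] by simp
  then show ?case
    using weight_nonneg[of A i] by (intro exI[of _ "[]"]) simp
next
  case (snoc k ws)
  show ?case
  proof (cases "i = k")
    case True
    then show ?thesis
      using reduced_word_length[OF snoc.prems(1,2)] snoc.prems(1)
      by (intro exI[of _ "ws @ [k]"]) simp
  next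
    case False
    then have "word_cluster A (ws @ [k]) i = word_cluster A ws i"
      "weight (word_matrix A (ws @ [k])) i = weight (word_matrix A ws) i"
      using weight_mut_other[OF snoc.prems(3)] snoc.prems(1) by (simp_all add: mut_cluster_def)
    then show ?thesis
      using snoc by (auto simp: distinct_adj_append_iff)
  qed
qed

lemma finite_bounded_weight_cluster_variables:
  "finite {x i | x B h i. seed_reach A g x B h \<and> i \<in> I3 \<and> weight B i \<le> n}"
proof (rule finite_subset)
  let ?W = "{vs. set vs \<subseteq> I3 \<and> length vs \<le> nat (max_weight A + n)}"
  show "{x i | x B h i. seed_reach A g x B h \<and> i \<in> I3 \<and> weight B i \<le> n} \<subseteq>
      (\<lambda>(vs, i). word_cluster A vs i) ` (?W \<times> I3)"
  proof clarify
    fix x B h i assume "seed_reach A g x B h" "i \<in> I3" "weight B i \<le> n"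
    moreover obtain ws where "set ws \<subseteq> I3" "distinct_adj ws" "word_seed A ws = (x, B)"
      using seed_reach_reduced_word[OF skew \<open>seed_reach A g x B h\<close>] by blast
    ultimately obtain vs where "set vs \<subseteq> I3"
      "int (length vs) \<le> max_weight A + n" "word_cluster A vs i = x i"
      using reduced_word_cluster_variable[of ws i] by force
    then show "x i \<in> (\<lambda>(vs, i). word_cluster A vs i) ` (?W \<times> I3)"
      using \<open>i \<in> I3\<close> by (intro image_eqI[of _ _ "(vs, i)"]) auto
  qed
  show "finite ((\<lambda>(vs, i). word_cluster A vs i) ` (?W \<times> I3))"
    using finite_lists_length_le[of I3] by (simp add: I3_def)
qed

end

section \<open>Degrees\<close>

lemma kernel_proportional_weight:
  assumes "skew3 B" "\<not> acyclic3 B" "\<forall>i\<in>I3. (\<Sum>j\<in>I3. B i j * g j) = 0" "i \<in> I3"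
  shows "g i * weight B 1 = g 1 * weight B i"
proof -
  define w1 w2 w3 where "w1 = weight B 1" "w2 = weight B 2" "w3 = weight B 3"
  obtain e where e: "e \<in> {1, -1}" and B: "B = cyc e w1 w2 w3"
    using cyclic_eq_cyc[OF assms(1,2)] unfolding w1_w2_w3_def .
  have "B i 1 * g 1 + B i 2 * g 2 + B i 3 * g 3 = 0" if "i \<in> I3" for i
    using assms(3) that by (simp add: sum_I3)
  from this[OF I3_mem(1)] this[OF I3_mem(3)] this[OF I3_mem(4)]
  have "w3 * g 2 = w2 * g 3" "w3 * g 1 = w1 * g 3" "w2 * g 1 = w1 * g 2"
    using e unfolding B cyc_def by (auto simp: algebra_simps)
  then show ?thesis
    using I3_cases[OF assms(4)] unfolding w1_w2_w3_def by (auto simp: algebra_simps)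
qed

lemma positive_column_sum:
  assumes "skew3 B" "\<not> acyclic3 B" "k \<in> I3"
  shows "(\<Sum>i\<in>{i\<in>I3. B i k > 0}. B i k * weight B i) = (\<Prod>j\<in>I3-{k}. weight B j)"
proof -
  define w1 w2 w3 where "w1 = weight B 1" "w2 = weight B 2" "w3 = weight B 3"
  obtain e where e: "e \<in> {1, -1}" and B: "B = cyc e w1 w2 w3"
    using cyclic_eq_cyc[OF assms(1,2)] unfolding w1_w2_w3_def .
  have "w1 > 0" "w2 > 0" "w3 > 0"
    using weight_pos_cyclic[OF assms(1,2)] unfolding w1_w2_w3_def by blast+
  moreover have "B 1 1 = 0" "B 2 2 = 0" "B 3 3 = 0" "B 1 2 = e * w3" "B 2 1 = - e * w3"
    "B 2 3 = e * w1" "B 3 2 = - e * w1" "B 3 1 = e * w2" "B 1 3 = - e * w2"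
    unfolding B cyc_def by simp_all
  moreover have "(\<Sum>i\<in>{i\<in>I3. B i k > 0}. B i k * weight B i) =
      (if B 1 k > 0 then B 1 k * w1 else 0) + (if B 2 k > 0 then B 2 k * w2 else 0) +
      (if B 3 k > 0 then B 3 k * w3 else 0)"
    unfolding sum.inter_filter[OF finite_I3] sum_I3 w1_w2_w3_def ..
  moreover have "(\<Prod>j\<in>I3-{k}. weight B j) =
      (if k = 1 then w2 * w3 else if k = 2 then w1 * w3 else w1 * w2)"
    using I3_cases[OF assms(3)] unfolding w1_w2_w3_def by (auto simp: I3_def insert_Diff_if)
  ultimately show ?thesis
    using e I3_cases[OF assms(3)] by (elim insertE emptyE disjE) simp_all
qed

context mutation_cyclic3
begin

lemma seed_degree_proportional:
  assumes kernel: "\<forall>i\<in>I3. (\<Sum>j\<in>I3. A i j * g j) = 0"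
  shows "seed_reach A g x B h \<Longrightarrow> mut_class A B \<and> (\<forall>i\<in>I3. h i * weight A 1 = g 1 * weight B i)"
proof (induction rule: seed_reach.induct)
  case init
  show ?case
    using kernel_proportional_weight[OF skew mut_class_cyclic[OF
      mut_class.refl] kernel] mut_class.refl
    by blast
next
  case (step x B h k)
  then have B: "mut_class A B" and deg: "\<forall>i\<in>I3. h i * weight A 1 = g 1 * weight B i"
    by auto
  have skewB: "skew3 B" and cycB: "\<not> acyclic3 B" "\<not> acyclic3 (mut k B)"
    using mut_class_skew3[OF skew B] mut_class_cyclic B mut_class.step[OF B step.hyps(2)] by auto
  have "(\<Sum>i\<in>{i\<in>I3. B i k > 0}. B i k * h i) * weight A 1
      = g 1 * (\<Sum>i\<in>{i\<in>I3. B i k > 0}. B i k * weight B i)"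
    using deg
    by (auto simp: sum_distrib_left sum_distrib_right mult.assoc mult.left_commute intro!: sum.cong)
  then have "mut_deg k B h k * weight A 1 = g 1 * weight (mut k B) k"
    using deg step.hyps(2)
    unfolding mut_deg_def weight_mut_cyclic[OF skewB cycB(1) step.hyps(2) cycB(2)]
      positive_column_sum[OF skewB cycB(1) step.hyps(2)]
    by (simp add: algebra_simps)
  moreover have "mut_deg k B h i = h i" "weight (mut k B) i = weight B i" if "i \<in> I3" "i \<noteq> k" for i
    using that weight_mut_other[OF that(1) step.hyps(2)] unfolding mut_deg_def by auto
  ultimately have "mut_deg k B h i * weight A 1 = g 1 * weight (mut k B) i" if "i \<in> I3" for i
    using deg that by (cases "i = k") auto
  then show ?case
    using mut_class.step[OF B step.hyps(2)] by blast
qed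

lemma kernel_first_entry_nonzero:
  assumes "\<forall>i\<in>I3. (\<Sum>j\<in>I3. A i j * g j) = 0" "\<exists>i\<in>I3. g i \<noteq> 0"
  shows "g 1 \<noteq> 0"
proof
  assume "g 1 = 0"
  moreover have "weight A 1 > 0"
    using weight_pos_cyclic[OF skew mut_class_cyclic[OF mut_class.refl]] .
  ultimately show False
    using assms kernel_proportional_weight[OF skew mut_class_cyclic[OF mut_class.refl] assms(1)]
    by auto
qed

lemma not_balanced:
  assumes "\<forall>i\<in>I3. (\<Sum>j\<in>I3. A i j * g j) = 0" "\<exists>i\<in>I3. g i \<noteq> 0"
  shows "\<not> balanced A g"
proof
  assume "balanced A g"
  then obtain f where f: "bij_betw f (cvars_deg A g (g 1)) (cvars_deg A g (- g 1))"
    unfolding balanced_def by blast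
  have "x0 1 \<in> cvars_deg A g (g 1)"
    unfolding cvars_deg_def using seed_reach.init[of A g] I3_mem(1) by blast
  moreover have "cvars_deg A g (- g 1) = {}"
  proof (rule ccontr)
    assume "cvars_deg A g (- g 1) \<noteq> {}"
    then obtain x B h i where reach: "seed_reach A g x B h" and i: "i \<in> I3" and "h i = - g 1"
      unfolding cvars_deg_def by blast
    then have "g 1 * (weight A 1 + weight B i) = 0"
      using seed_degree_proportional[OF assms(1) reach] by (auto simp: algebra_simps)
    moreover have "weight A 1 > 0" "weight B i > 0"
      using weight_pos_cyclic mut_class_skew3[OF skew] mut_class_cyclic
        seed_degree_proportional[OF assms(1) reach]
        mut_class.refl by blast+
    ultimately show False
      using kernel_first_entry_nonzero[OF assms] by simp
  qed
  ultimately show False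
    using f unfolding bij_betw_def by blast
qed

end

lemma (in markov_mutation_cyclic3) finite_cvars_deg:
  assumes "\<forall>i\<in>I3. (\<Sum>j\<in>I3. A i j * g j) = 0" "\<exists>i\<in>I3. g i \<noteq> 0"
  shows "finite (cvars_deg A g d)"
proof (rule finite_subset[OF _ finite_bounded_weight_cluster_variables])
  show "cvars_deg A g d
      \<subseteq> {x i | x B h i. seed_reach A g x B h \<and> i \<in> I3 \<and> weight B i \<le> \<bar>d\<bar> * weight A 1}"
  proof
    fix v assume "v \<in> cvars_deg A g d"
    then obtain x B h i where reach: "seed_reach A g x B h" and i: "i \<in> I3" and "v = x i" "h i = d"
      unfolding cvars_deg_def by blast
    then have "\<bar>d\<bar> * weight A 1 = \<bar>g 1\<bar> * weight B i"
      using seed_degree_proportional[OF assms(1) reach] weight_nonneg[of A 1] weight_nonneg[of B i]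
      by (metis abs_mult abs_of_nonneg)
    moreover have "\<bar>g 1\<bar> \<ge> 1"
      using kernel_first_entry_nonzero[OF assms] by linarith
    ultimately have "weight B i \<le> \<bar>d\<bar> * weight A 1"
      using weight_nonneg[of B i] by (simp add: mult_le_cancel_right1)
    then show "v \<in> {x i | x B h i. seed_reach A g x B h \<and> i \<in> I3 \<and> weight B i \<le> \<bar>d\<bar> * weight A 1}"
      using reach i \<open>v = x i\<close> by blast
  qed
qed

theorem mainTheorem1:
  fixes A :: mat3 and g :: "nat \<Rightarrow> int" and a b c :: int
  assumes "skew3 A"
    and "mutation_cyclic A"
    and "\<exists>i\<in>I3. g i \<noteq> 0"
    and "\<forall>i\<in>I3. (\<Sum>j\<in>I3. A i j * g j) = 0"
    and "m_out A (S (-a) (-b) c) \<or> m_out A (negm (S (-a) (-b) c))"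
    and "c > 2"
  shows "(\<forall>d. cvars_deg A g d \<noteq> {} \<longrightarrow> finite (cvars_deg A g d)) \<and> \<not> balanced A g"
proof -
  interpret mutation_cyclic3 A
    using assms(1,2) by unfold_locales
  have "markov A \<le> 0"
    using markov_nonpos_of_m_out assms(5,6) by blast
  then interpret markov_mutation_cyclic3 A
    by unfold_locales
  show ?thesis
    using finite_cvars_deg[OF assms(4,3)] not_balanced[OF assms(4,3)] by blast
qed

end
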